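(* Let $E\subset\mathbb{R}^d$ be such that $\chi_E\in W^{\eta,p}(\mathbb{R}^d)$ with $0<\eta<1$, $1\le p<\infty$, and $\eta p<1$. Then there exists a constant $C=C(\eta,p,d)$ such that $$\|\widehat{\chi_E}\|_{L^{\frac{2d}{d+\eta p},\infty}(\mathbb{R}^d)}\le C\,\|\chi_E\|_{W^{\eta,p}}^{p/2}.$$
   Context: $\chi_E$ is the characteristic function of $E$. $W^{\eta,p}(\mathbb{R}^d)$ is the space defined by the Gagliardo–Slobodeckij seminorm $\|\chi_E\|_{W^{\eta,p}}^p=\int_{\mathbb{R}^d}\int_{\mathbb{R}^d}\frac{|\chi_E(x)-\chi_E(y)|^p}{|x-y|^{d+\eta p}}\,dx\,dy$. The Fourier transform is $\widehat{f}(\xi)=\int e^{-2\pi i x\cdot\xi}f(x)\,dx$. For $1\le r<\infty$, $\|g\|_{L^{r,\infty}}=\sup_{t>0}t\,|\{x:|g(x)|>t\}|^{1/r}$. *)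

theory Defs
  imports "HOL-Analysis.Analysis"
begin

definition fourier_transform :: "('a::euclidean_space \<Rightarrow> complex) \<Rightarrow> 'a \<Rightarrow> complex" where
  "fourier_transform f \<xi> = (LINT x|lebesgue. cis (- 2 * pi * (x \<bullet> \<xi>)) * f x)"

definition char_fun :: "'a set \<Rightarrow> 'a \<Rightarrow> complex" where
  "char_fun E x = (if x \<in> E then 1 else 0)"

definition ennreal_powr :: "ennreal \<Rightarrow> real \<Rightarrow> ennreal" where
  "ennreal_powr m a = (if m = \<infinity> then \<infinity> else ennreal (enn2real m powr a))"

definition weak_Lr_norm :: "real \<Rightarrow> ('a::euclidean_space \<Rightarrow> complex) \<Rightarrow> ennreal" where
  "weak_Lr_norm r g =
     (SUP t\<in>{0<..}. ennreal t * ennreal_powr (emeasure lebesgue {x. norm (g x) > t}) (1 / r))"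

definition gagliardo_p :: "real \<Rightarrow> real \<Rightarrow> 'a::euclidean_space set \<Rightarrow> ennreal" where
  "gagliardo_p \<eta> p E =
     (\<integral>\<^sup>+ x. (\<integral>\<^sup>+ y. ennreal (norm (char_fun E x - char_fun E y) powr p
          / norm (x - y) powr (real DIM('a) + \<eta> * p)) \<partial>lebesgue) \<partial>lebesgue)"

text \<open>chi_E belongs to W^{eta,p}(R^d): chi_E in L^p (E measurable of finite measure)
  and finite Gagliardo seminorm.\<close>
definition char_in_W :: "real \<Rightarrow> real \<Rightarrow> 'a::euclidean_space set \<Rightarrow> bool" where
  "char_in_W \<eta> p E \<longleftrightarrow> E \<in> sets lebesgue \<and> emeasure lebesgue E < \<infinity> \<and> gagliardo_p \<eta> p E < \<infinity>"

end

theory Submission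
  imports Defs "HOL-Probability.Probability"
begin

text \<open>Write s = \<eta> p.  As \<chi>_E only takes the values 0 and 1, p enters the Gagliardo seminorm
  [\<chi>_E] only through s, and by Plancherel
    [\<chi>_E] = \<integral> |\<chi>_E^(\<xi>)|^2 (\<integral> |1 - exp (2 \<pi> i h \<cdot> \<xi>)|^2 / |h|^(d+s) dh) d\<xi>,
  where the inner integral is at least c |\<xi>|^s.  On the level set A = {|\<chi>_E^| > t} this gives
  t^2 \<integral>_A |\<xi>|^s d\<xi> \<le> C [\<chi>_E], and as \<integral>_A |\<xi>|^s \<ge> c |A|^(1+s/d) for every set of finite
  measure, |A| \<le> C ([\<chi>_E] / t^2)^(d/(d+s)), which is the weak-type bound.

  Plancherel is only needed as an inequality on balls.  For f \<in> L^1 one has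
  \<integral> exp (-\<pi> \<epsilon> |\<xi>|^2) |f^(\<xi>)|^2 d\<xi> = \<integral> f (f * K_\<epsilon>) with the Gaussian kernel K_\<epsilon> of mass 1
  (by Fubini, all integrals being absolutely convergent), and Schur's test bounds this by \<integral> f^2.\<close>

lemma borel_measurable_cis[measurable]: "cis \<in> borel_measurable borel"
  by (intro borel_measurable_continuous_onI continuous_intros)

lemma borel_measurable_cnj[measurable]: "cnj \<in> borel_measurable borel"
  by (intro borel_measurable_continuous_onI continuous_intros)

lemma norm_integral_le_nn_integral:
  fixes f :: "'a \<Rightarrow> 'b::{banach, second_countable_topology}"
  shows "ennreal (norm (integral\<^sup>L M f)) \<le> (\<integral>\<^sup>+x. ennreal (norm (f x)) \<partial>M)"
  by (cases "integrable M f") (simp_all add: integral_norm_bound_ennreal not_integrable_integral_eq)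

lemma nn_integral_lborel_translate:
  fixes f :: "'a::euclidean_space \<Rightarrow> ennreal"
  assumes [measurable]: "f \<in> borel_measurable borel"
  shows "(\<integral>\<^sup>+y. f (c + y) \<partial>lborel) = (\<integral>\<^sup>+y. f y \<partial>lborel)"
  by (subst lborel_distr_plus[symmetric, of c]) (simp add: nn_integral_distr)

lemma integral_lborel_translate:
  fixes f :: "'a::euclidean_space \<Rightarrow> 'b::{banach, second_countable_topology}"
  assumes [measurable]: "f \<in> borel_measurable borel"
  shows "(\<integral>y. f (c + y) \<partial>lborel) = (\<integral>y. f y \<partial>lborel)"
  by (subst lborel_distr_plus[symmetric, of c]) (simp add: integral_distr)

lemma integrable_lborel_translate:
  fixes f :: "'a::euclidean_space \<Rightarrow> 'b::{banach, second_countable_topology}"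
  assumes "integrable lborel f"
  shows "integrable lborel (\<lambda>x. f (c + x))"
proof -
  have [measurable]: "f \<in> borel_measurable borel" using assms by auto
  have "integrable (distr lborel borel ((+) c)) f" using assms by (simp add: lborel_distr_plus)
  then show ?thesis by (subst (asm) integrable_distr_eq) auto
qed

lemma (in pair_sigma_finite) Fubini_integral_bounded:
  fixes g :: "'a \<Rightarrow> real" and a :: "'b \<Rightarrow> real" and c :: "'a \<Rightarrow> 'b \<Rightarrow> complex"
  assumes "integrable M1 g" "integrable M2 a"
    and "case_prod c \<in> borel_measurable (M1 \<Otimes>\<^sub>M M2)" and "\<And>u v. norm (c u v) \<le> B"
  shows "(\<integral>u. \<integral>v. complex_of_real (g u * a v) * c u v \<partial>M2 \<partial>M1)
       = (\<integral>v. \<integral>u. complex_of_real (g u * a v) * c u v \<partial>M1 \<partial>M2)"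
proof (rule Fubini_integral[symmetric])
  have [measurable]: "g \<in> borel_measurable M1" "a \<in> borel_measurable M2" using assms by auto
  have dominant: "integrable (M1 \<Otimes>\<^sub>M M2) (\<lambda>z. B * \<bar>g (fst z)\<bar> * \<bar>a (snd z)\<bar>)"
    using assms(1,2) by (intro Fubini_integrable) (auto simp: abs_mult)
  have B: "0 \<le> B" using norm_ge_zero assms(4) order_trans by blast
  have bound: "norm (complex_of_real (g u * a v) * c u v) \<le> B * \<bar>g u\<bar> * \<bar>a v\<bar>" for u v
    using mult_left_mono[OF assms(4)[of u v], of "\<bar>g u * a v\<bar>"] by (simp add: norm_mult abs_mult mult_ac)
  show "integrable (M1 \<Otimes>\<^sub>M M2) (case_prod (\<lambda>u v. complex_of_real (g u * a v) * c u v))"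
    using assms(3) bound B
    by (intro Bochner_Integration.integrable_bound[OF dominant]) (auto split: prod.split simp: abs_mult)
qed

lemma ennreal_integral_quadratic_form_le:
  fixes f :: "'a \<Rightarrow> real" and K :: "'a \<Rightarrow> 'a \<Rightarrow> real"
  assumes "f \<in> borel_measurable M" "\<And>x. K x \<in> borel_measurable M" "\<And>x y. 0 \<le> K x y"
  shows "ennreal (\<integral>x. f x * (\<integral>y. f y * K x y \<partial>M) \<partial>M)
     \<le> (\<integral>\<^sup>+x. \<integral>\<^sup>+y. ennreal (\<bar>f x\<bar> * \<bar>f y\<bar> * K x y) \<partial>M \<partial>M)"
proof -
  have "ennreal (\<integral>x. f x * (\<integral>y. f y * K x y \<partial>M) \<partial>M)
      \<le> (\<integral>\<^sup>+x. ennreal (norm (f x * (\<integral>y. f y * K x y \<partial>M))) \<partial>M)"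
    by (rule order_trans[OF _ norm_integral_le_nn_integral]) simp
  also have "\<dots> \<le> (\<integral>\<^sup>+x. ennreal \<bar>f x\<bar> * (\<integral>\<^sup>+y. ennreal (norm (f y * K x y)) \<partial>M) \<partial>M)"
  proof (intro nn_integral_mono)
    fix x
    have "ennreal (norm (f x * (\<integral>y. f y * K x y \<partial>M)))
        = ennreal \<bar>f x\<bar> * ennreal (norm (\<integral>y. f y * K x y \<partial>M))"
      by (simp add: abs_mult ennreal_mult)
    also have "\<dots> \<le> ennreal \<bar>f x\<bar> * (\<integral>\<^sup>+y. ennreal (norm (f y * K x y)) \<partial>M)"
      by (rule mult_left_mono[OF norm_integral_le_nn_integral]) simp
    finally show "ennreal (norm (f x * (\<integral>y. f y * K x y \<partial>M)))
        \<le> ennreal \<bar>f x\<bar> * (\<integral>\<^sup>+y. ennreal (norm (f y * K x y)) \<partial>M)" .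
  qed
  also have "\<dots> = (\<integral>\<^sup>+x. \<integral>\<^sup>+y. ennreal (\<bar>f x\<bar> * \<bar>f y\<bar> * K x y) \<partial>M \<partial>M)"
    using assms by (simp add: nn_integral_cmult[symmetric] abs_mult ennreal_mult mult.assoc)
  finally show ?thesis .
qed

lemma (in sigma_finite_measure) Schur_test_nn_integral:
  fixes f :: "'a \<Rightarrow> real" and K :: "'a \<Rightarrow> 'a \<Rightarrow> real"
  assumes [measurable]: "f \<in> borel_measurable M" "case_prod K \<in> borel_measurable (M \<Otimes>\<^sub>M M)"
    and K_nonneg: "\<And>x y. 0 \<le> K x y"
    and rows: "\<And>x. (\<integral>\<^sup>+y. ennreal (K x y) \<partial>M) \<le> 1"
    and columns: "\<And>y. (\<integral>\<^sup>+x. ennreal (K x y) \<partial>M) \<le> 1"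
  shows "(\<integral>\<^sup>+x. \<integral>\<^sup>+y. ennreal (\<bar>f x\<bar> * \<bar>f y\<bar> * K x y) \<partial>M \<partial>M) \<le> (\<integral>\<^sup>+x. ennreal ((f x)\<^sup>2) \<partial>M)"
proof -
  interpret pair_sigma_finite M M ..
  have [measurable]: "K x \<in> borel_measurable M" if "x \<in> space M" for x
    using measurable_Pair2[OF assms(2) that] by simp
  have [measurable]: "(\<lambda>x. K x y) \<in> borel_measurable M" if "y \<in> space M" for y
    using measurable_Pair1[OF assms(2) that] by simp
  have mass: "(\<integral>\<^sup>+y. ennreal (c * k y) \<partial>M) \<le> ennreal c"
    if "0 \<le> c" "k \<in> borel_measurable M" "(\<integral>\<^sup>+y. ennreal (k y) \<partial>M) \<le> 1" "\<And>y. 0 \<le> k y" for c k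
  proof -
    have "(\<integral>\<^sup>+y. ennreal (c * k y) \<partial>M) = ennreal c * (\<integral>\<^sup>+y. ennreal (k y) \<partial>M)"
      using that by (subst nn_integral_cmult[symmetric]) (auto simp flip: ennreal_mult)
    also have "\<dots> \<le> ennreal c" using mult_left_mono[OF that(3), of "ennreal c"] by simp
    finally show ?thesis .
  qed
  have am_gm: "\<bar>f x\<bar> * \<bar>f y\<bar> * K x y \<le> (f x)\<^sup>2 / 2 * K x y + (f y)\<^sup>2 / 2 * K x y" for x y
  proof -
    have "\<bar>f x\<bar> * \<bar>f y\<bar> \<le> (f x)\<^sup>2 / 2 + (f y)\<^sup>2 / 2"
      using zero_le_power2[of "\<bar>f x\<bar> - \<bar>f y\<bar>"] by (simp add: power2_diff field_simps)
    from mult_right_mono[OF this K_nonneg[of x y]] show ?thesis by (simp add: algebra_simps)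
  qed
  have "(\<integral>\<^sup>+x. \<integral>\<^sup>+y. ennreal (\<bar>f x\<bar> * \<bar>f y\<bar> * K x y) \<partial>M \<partial>M)
      \<le> (\<integral>\<^sup>+x. \<integral>\<^sup>+y. ennreal ((f x)\<^sup>2 / 2 * K x y) + ennreal ((f y)\<^sup>2 / 2 * K x y) \<partial>M \<partial>M)"
    using am_gm by (intro nn_integral_mono) (simp add: K_nonneg flip: ennreal_plus)
  also have "\<dots> = (\<integral>\<^sup>+x. \<integral>\<^sup>+y. ennreal ((f x)\<^sup>2 / 2 * K x y) \<partial>M \<partial>M)
      + (\<integral>\<^sup>+x. \<integral>\<^sup>+y. ennreal ((f y)\<^sup>2 / 2 * K x y) \<partial>M \<partial>M)"
    by (subst nn_integral_add[symmetric]) (auto intro!: nn_integral_cong nn_integral_add)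
  also have "(\<integral>\<^sup>+x. \<integral>\<^sup>+y. ennreal ((f y)\<^sup>2 / 2 * K x y) \<partial>M \<partial>M)
      = (\<integral>\<^sup>+y. \<integral>\<^sup>+x. ennreal ((f y)\<^sup>2 / 2 * K x y) \<partial>M \<partial>M)"
    by (rule Fubini'[symmetric]) measurable
  also have "(\<integral>\<^sup>+x. \<integral>\<^sup>+y. ennreal ((f x)\<^sup>2 / 2 * K x y) \<partial>M \<partial>M)
      + (\<integral>\<^sup>+y. \<integral>\<^sup>+x. ennreal ((f y)\<^sup>2 / 2 * K x y) \<partial>M \<partial>M)
      \<le> (\<integral>\<^sup>+x. ennreal ((f x)\<^sup>2 / 2) \<partial>M) + (\<integral>\<^sup>+y. ennreal ((f y)\<^sup>2 / 2) \<partial>M)"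
    by (intro add_mono nn_integral_mono mass) (auto simp: K_nonneg rows columns)
  also have "\<dots> = (\<integral>\<^sup>+x. ennreal ((f x)\<^sup>2) \<partial>M)"
    by (simp add: nn_integral_add[symmetric] flip: ennreal_plus)
  finally show ?thesis .
qed

lemma emeasure_le_of_Int_ball_le:
  fixes A :: "'a::euclidean_space set"
  assumes "A \<in> sets borel" and "\<And>R. 0 < R \<Longrightarrow> emeasure lborel (A \<inter> ball 0 R) \<le> b"
  shows "emeasure lborel A \<le> b"
proof -
  have "(\<Union>n. A \<inter> ball 0 (Suc n)) = A"
  proof (intro equalityI subsetI)
    fix x assume "x \<in> A"
    obtain n :: nat where "norm x < n" using reals_Archimedean2 by blast
    with \<open>x \<in> A\<close> show "x \<in> (\<Union>n. A \<inter> ball 0 (Suc n))"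
      by (intro UN_I[of n]) auto
  qed blast
  then have "emeasure lborel A = (SUP n. emeasure lborel (A \<inter> ball 0 (Suc n)))"
    using assms(1) by (subst SUP_emeasure_incseq) (auto simp: incseq_def)
  also have "\<dots> \<le> b"
    by (intro SUP_least assms(2)) simp
  finally show ?thesis .
qed

lemma le_powr_inverse_of_powr_le:
  fixes m a X :: real
  assumes "0 \<le> m" "0 < a" "m powr a \<le> X"
  shows "m \<le> X powr (1 / a)"
proof -
  have "m = (m powr a) powr (1 / a)" using assms(1,2) by (simp add: powr_powr)
  also have "\<dots> \<le> X powr (1 / a)" using assms(2,3) by (intro powr_mono2) auto
  finally show ?thesis .
qed

lemma weak_Lr_norm_le:
  fixes g :: "'a::euclidean_space \<Rightarrow> complex"
  assumes r: "0 < r" and B: "0 \<le> B"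
    and level: "\<And>t. 0 < t \<Longrightarrow> emeasure lebesgue {x. t < norm (g x)} \<le> ennreal ((B / t) powr r)"
  shows "weak_Lr_norm r g \<le> ennreal B"
  unfolding weak_Lr_norm_def
proof (rule SUP_least)
  fix t :: real assume "t \<in> {0<..}"
  then have t: "0 < t" by simp
  define \<mu> where "\<mu> = measure lebesgue {x. t < norm (g x)}"
  have "emeasure lebesgue {x. t < norm (g x)} < \<infinity>"
    using level[OF t] by (rule le_less_trans) simp
  then have \<mu>: "emeasure lebesgue {x. t < norm (g x)} = ennreal \<mu>" "\<mu> \<le> (B / t) powr r"
    using level[OF t] by (auto simp: \<mu>_def emeasure_eq_ennreal_measure less_top)
  have "0 \<le> \<mu>" by (simp add: \<mu>_def)
  have "t * \<mu> powr (1 / r) \<le> t * ((B / t) powr r) powr (1 / r)"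
    using \<mu> t r \<open>0 \<le> \<mu>\<close> by (intro mult_left_mono powr_mono2) auto
  also have "\<dots> = B"
    using t r B by (simp add: powr_powr)
  finally show "ennreal t * ennreal_powr (emeasure lebesgue {x. t < norm (g x)}) (1 / r) \<le> ennreal B"
    using t \<open>0 \<le> \<mu>\<close> by (simp add: \<mu> ennreal_powr_def ennreal_mult'[symmetric] ennreal_leI)
qed

section \<open>Gaussians\<close>

lemma integrable_gaussian_real:
  fixes e :: real assumes "e > 0"
  shows "integrable lborel (\<lambda>t. exp (-pi * e * t\<^sup>2))"
proof -
  define a where "a = sqrt (2 * pi * e)"
  have "a > 0" "a\<^sup>2 = 2 * pi * e" using assms by (simp_all add: a_def)
  have "integrable lborel (\<lambda>t. std_normal_density (0 + a * t))"
    using lborel_integrable_real_affine[of std_normal_density a 0] integrable_std_normal_moment[of 0]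
      \<open>a > 0\<close> by simp
  then have "integrable lborel (\<lambda>t. sqrt (2 * pi) * std_normal_density (a * t))" by simp
  moreover have "sqrt (2 * pi) * std_normal_density (a * t) = exp (-pi * e * t\<^sup>2)" for t
    using \<open>a\<^sup>2 = 2 * pi * e\<close> by (simp add: std_normal_density_def power_mult_distrib)
  ultimately show ?thesis by simp
qed

text \<open>The one-dimensional transform is read off from the characteristic function of the
  standard normal distribution after the substitution \<open>x = sqrt (2 pi e) t\<close>.\<close>

lemma fourier_gaussian_real:
  fixes e u :: real assumes "e > 0"
  shows "(\<integral>t. complex_of_real (exp (-pi * e * t\<^sup>2)) * cis (-2 * pi * u * t) \<partial>lborel)
          = complex_of_real (exp (-pi * u\<^sup>2 / e) / sqrt e)"
proof -
  define a where "a = sqrt (2 * pi * e)"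
  have a: "a > 0" "a\<^sup>2 = 2 * pi * e" using assms by (simp_all add: a_def)
  define \<theta> where "\<theta> = -2 * pi * u / a"
  have integrand: "complex_of_real (std_normal_density (0 + a * t)) * iexp (\<theta> * (0 + a * t))
      = complex_of_real (1 / sqrt (2 * pi)) * (complex_of_real (exp (-pi * e * t\<^sup>2)) * cis (-2 * pi * u * t))"
    for t
  proof -
    have "\<theta> * (0 + a * t) = -2 * pi * u * t" using a by (simp add: \<theta>_def)
    moreover have "std_normal_density (0 + a * t) = 1 / sqrt (2 * pi) * exp (-pi * e * t\<^sup>2)"
      using a by (simp add: std_normal_density_def power_mult_distrib)
    ultimately show ?thesis by (simp add: cis_conv_exp)
  qed
  have "complex_of_real (exp (- \<theta>\<^sup>2 / 2)) = char std_normal_distribution \<theta>"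
    by (simp add: char_std_normal_distribution)
  also have "\<dots> = (\<integral>x. complex_of_real (std_normal_density x) * iexp (\<theta> * x) \<partial>lborel)"
    unfolding char_def by (subst integral_density) (auto simp: scaleR_conv_of_real)
  also have "\<dots> = a *\<^sub>R (\<integral>t. complex_of_real (std_normal_density (0 + a * t)) * iexp (\<theta> * (0 + a * t)) \<partial>lborel)"
    using lborel_integral_real_affine[of a "\<lambda>x. complex_of_real (std_normal_density x) * iexp (\<theta> * x)" 0] a
    by simp
  also have "\<dots> = complex_of_real (a / sqrt (2 * pi))
      * (\<integral>t. complex_of_real (exp (-pi * e * t\<^sup>2)) * cis (-2 * pi * u * t) \<partial>lborel)"
    unfolding integrand integral_mult_right_zero by (simp add: scaleR_conv_of_real)
  finally have "(\<integral>t. complex_of_real (exp (-pi * e * t\<^sup>2)) * cis (-2 * pi * u * t) \<partial>lborel)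
      = complex_of_real (exp (- (\<theta>\<^sup>2 / 2)) * (sqrt (2 * pi) / a))"
    using a by (simp add: field_simps)
  moreover have "\<theta>\<^sup>2 / 2 = pi * u\<^sup>2 / e" "sqrt (2 * pi) / a = 1 / sqrt e"
    using a assms by (simp_all add: \<theta>_def power_divide field_simps real_sqrt_mult a_def power2_eq_square)
  ultimately show ?thesis by simp
qed

lemma
  fixes f :: "'a::euclidean_space \<Rightarrow> real \<Rightarrow> 'b::{real_normed_field,banach,second_countable_topology}"
  assumes "\<And>b. b \<in> Basis \<Longrightarrow> integrable lborel (f b)"
  shows integrable_prod_Basis: "integrable (lborel::'a measure) (\<lambda>x. \<Prod>b\<in>Basis. f b (x \<bullet> b))"
    and integral_prod_Basis:
      "(\<integral>x. (\<Prod>b\<in>Basis. f b (x \<bullet> b)) \<partial>(lborel::'a measure)) = (\<Prod>b\<in>Basis. integral\<^sup>L lborel (f b))"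
proof -
  interpret product_sigma_finite "\<lambda>_::'a. lborel::real measure" ..
  let ?T = "\<lambda>g::'a \<Rightarrow> real. \<Sum>b\<in>Basis. g b *\<^sub>R b"
  have T: "?T \<in> measurable (\<Pi>\<^sub>M b\<in>Basis. lborel) (borel::'a measure)"
    by measurable
  have meas: "(\<lambda>x. \<Prod>b\<in>Basis. f b (x \<bullet> b)) \<in> borel_measurable (borel::'a measure)"
    using assms by (intro borel_measurable_prod) (auto intro: borel_measurable_integrable)
  have coords: "(\<Prod>b\<in>Basis. f b (?T g \<bullet> b)) = (\<Prod>b\<in>Basis. f b (g b))" for g
    by (intro prod.cong refl) (simp add: inner_sum_left inner_Basis if_distrib[of "\<lambda>x. _ * x"] cong: if_cong)
  have "integrable (\<Pi>\<^sub>M b\<in>Basis. lborel) (\<lambda>g. \<Prod>b\<in>Basis. f b (g b))"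
    using assms by (intro product_integrable_prod) auto
  then show "integrable (lborel::'a measure) (\<lambda>x. \<Prod>b\<in>Basis. f b (x \<bullet> b))"
    by (subst lborel_eq) (simp add: integrable_distr_eq[OF T meas] coords)
  have "(\<integral>x. (\<Prod>b\<in>Basis. f b (x \<bullet> b)) \<partial>(lborel::'a measure))
      = (\<integral>g. (\<Prod>b\<in>Basis. f b (g b)) \<partial>(\<Pi>\<^sub>M b\<in>Basis. lborel))"
    by (subst lborel_eq) (simp add: integral_distr[OF T meas] coords)
  also have "\<dots> = (\<Prod>b\<in>Basis. integral\<^sup>L lborel (f b))"
    using assms by (intro product_integral_prod) auto
  finally show "(\<integral>x. (\<Prod>b\<in>Basis. f b (x \<bullet> b)) \<partial>(lborel::'a measure)) = (\<Prod>b\<in>Basis. integral\<^sup>L lborel (f b))" .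
qed

lemma exp_norm_power2_eq_prod_Basis:
  fixes x :: "'a::euclidean_space"
  shows "exp (c * (norm x)\<^sup>2) = (\<Prod>b\<in>Basis. exp (c * (x \<bullet> b)\<^sup>2))"
proof -
  have "c * (norm x)\<^sup>2 = (\<Sum>b\<in>Basis. c * (x \<bullet> b)\<^sup>2)"
    by (simp only: power2_norm_eq_inner euclidean_inner[of x x]) (simp add: power2_eq_square sum_distrib_left)
  then show ?thesis by (simp add: exp_sum)
qed

lemma integrable_gaussian:
  fixes e :: real assumes "e > 0"
  shows "integrable lborel (\<lambda>\<xi>::'a::euclidean_space. exp (-pi * e * (norm \<xi>)\<^sup>2))"
  unfolding exp_norm_power2_eq_prod_Basis
  by (rule integrable_prod_Basis[where f="\<lambda>b t. exp (-pi * e * t\<^sup>2)"])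
    (rule integrable_gaussian_real[OF assms])

definition gauss_kernel :: "real \<Rightarrow> 'a::euclidean_space \<Rightarrow> real" where
  "gauss_kernel e z = exp (-pi * (norm z)\<^sup>2 / e) / sqrt e ^ DIM('a)"

lemma fourier_gaussian:
  fixes e :: real and z :: "'a::euclidean_space" assumes "e > 0"
  shows "(\<integral>\<xi>. complex_of_real (exp (-pi * e * (norm \<xi>)\<^sup>2)) * cis (-2 * pi * (z \<bullet> \<xi>)) \<partial>lborel)
          = complex_of_real (gauss_kernel e z)"
proof -
  have factor: "complex_of_real (exp (-pi * e * (norm \<xi>)\<^sup>2)) * cis (-2 * pi * (z \<bullet> \<xi>))
     = (\<Prod>b\<in>Basis. complex_of_real (exp (-pi * e * (\<xi> \<bullet> b)\<^sup>2)) * cis (-2 * pi * (z \<bullet> b) * (\<xi> \<bullet> b)))"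
    for \<xi> :: 'a
  proof -
    have "cis (-2 * pi * (z \<bullet> \<xi>)) = (\<Prod>b\<in>Basis. cis (-2 * pi * (z \<bullet> b) * (\<xi> \<bullet> b)))"
      by (simp add: cis_conv_exp euclidean_inner[of z \<xi>] sum_distrib_left exp_sum mult_ac)
    then show ?thesis
      unfolding exp_norm_power2_eq_prod_Basis of_real_prod prod.distrib by simp
  qed
  have "(\<integral>\<xi>. complex_of_real (exp (-pi * e * (norm \<xi>)\<^sup>2)) * cis (-2 * pi * (z \<bullet> \<xi>)) \<partial>lborel)
      = (\<Prod>b\<in>(Basis::'a set). \<integral>t. complex_of_real (exp (-pi * e * t\<^sup>2)) * cis (-2 * pi * (z \<bullet> b) * t) \<partial>lborel)"
    unfolding factor
  proof (rule integral_prod_Basis)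
    show "integrable lborel (\<lambda>t. complex_of_real (exp (-pi * e * t\<^sup>2)) * cis (-2 * pi * (z \<bullet> b) * t))" for b
      by (rule Bochner_Integration.integrable_bound[OF integrable_gaussian_real[OF assms]])
        (measurable, auto simp: norm_mult)
  qed
  also have "\<dots> = (\<Prod>b\<in>(Basis::'a set). complex_of_real (exp (-pi * (z \<bullet> b)\<^sup>2 / e) / sqrt e))"
    using fourier_gaussian_real[OF assms] by simp
  also have "\<dots> = complex_of_real (gauss_kernel e z)"
    using exp_norm_power2_eq_prod_Basis[of "-pi / e" z]
    by (simp add: gauss_kernel_def prod_dividef)
  finally show ?thesis .
qed

lemma gauss_kernel_nonneg: "e > 0 \<Longrightarrow> 0 \<le> gauss_kernel e z"
  by (simp add: gauss_kernel_def)

lemma gauss_kernel_minus_commute: "gauss_kernel e (x - y) = gauss_kernel e (y - x)"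
  by (simp add: gauss_kernel_def norm_minus_commute)

lemma borel_measurable_gauss_kernel[measurable]: "gauss_kernel e \<in> borel_measurable borel"
  unfolding gauss_kernel_def by measurable

lemma nn_integral_gauss_kernel:
  fixes e :: real assumes "e > 0"
  shows "(\<integral>\<^sup>+z. ennreal (gauss_kernel e (z::'a::euclidean_space)) \<partial>lborel) = 1"
proof -
  have "complex_of_real (\<integral>\<xi>. exp (-pi * (1 / e) * (norm (\<xi>::'a))\<^sup>2) \<partial>lborel)
      = complex_of_real (gauss_kernel (1 / e) (0::'a))"
    using fourier_gaussian[of "1 / e" "0::'a"] assms by simp
  then have "(\<integral>\<xi>. exp (-pi * (norm (\<xi>::'a))\<^sup>2 / e) \<partial>lborel) = sqrt e ^ DIM('a)"
    using assms by (simp add: gauss_kernel_def real_sqrt_divide power_divide flip: of_real_power)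
  then have "(\<integral>z. gauss_kernel e (z::'a) \<partial>lborel) = 1"
    using assms by (simp add: gauss_kernel_def)
  moreover have "integrable lborel (\<lambda>z::'a. gauss_kernel e z)"
    using integrable_gaussian[of "1 / e", where 'a='a] assms by (simp add: gauss_kernel_def)
  ultimately show ?thesis
    using assms by (subst nn_integral_eq_integral) (auto simp: gauss_kernel_nonneg)
qed

lemma nn_integral_gauss_kernel_diff:
  fixes e :: real and x :: "'a::euclidean_space" assumes "e > 0"
  shows "(\<integral>\<^sup>+y. ennreal (gauss_kernel e (x - y)) \<partial>lborel) = 1"
proof -
  have "gauss_kernel e (x - y) = gauss_kernel e (-x + y)" for y
    by (simp add: gauss_kernel_minus_commute)
  then show ?thesis
    using nn_integral_lborel_translate[of "\<lambda>y. ennreal (gauss_kernel e y)" "-x"]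
      nn_integral_gauss_kernel[OF assms] by simp
qed

section \<open>Fourier transform of integrable real functions\<close>

definition fourier_real :: "('a::euclidean_space \<Rightarrow> real) \<Rightarrow> 'a \<Rightarrow> complex" where
  "fourier_real f \<xi> = (\<integral>x. cis (-2 * pi * (x \<bullet> \<xi>)) * complex_of_real (f x) \<partial>lborel)"

lemma borel_measurable_fourier_real[measurable]:
  assumes [measurable]: "f \<in> borel_measurable borel"
  shows "fourier_real f \<in> borel_measurable borel"
  unfolding fourier_real_def by measurable

lemma norm_fourier_real_le: "norm (fourier_real f \<xi>) \<le> (\<integral>x. \<bar>f x\<bar> \<partial>lborel)"
  unfolding fourier_real_def by (rule order_trans[OF integral_norm_bound]) (simp add: norm_mult)

lemma cnj_fourier_real:
  "cnj (fourier_real f \<xi>) = (\<integral>y. cis (2 * pi * (y \<bullet> \<xi>)) * complex_of_real (f y) \<partial>lborel)"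
  unfolding fourier_real_def by (subst Bochner_Integration.integral_cnj[symmetric]) (simp add: cis_cnj)

lemma integral_gaussian_cnj_fourier_real:
  fixes f :: "'a::euclidean_space \<Rightarrow> real"
  assumes f: "integrable lborel f" and e: "e > 0"
  shows "(\<integral>\<xi>. complex_of_real (exp (-pi * e * (norm \<xi>)\<^sup>2)) * (cis (-2 * pi * (x \<bullet> \<xi>)) * cnj (fourier_real f \<xi>)) \<partial>lborel)
       = complex_of_real (\<integral>y. f y * gauss_kernel e (x - y) \<partial>lborel)"
proof -
  let ?g = "\<lambda>\<xi>::'a. exp (-pi * e * (norm \<xi>)\<^sup>2)"
  have inner: "cis (-2 * pi * (x \<bullet> \<xi>)) * cnj (fourier_real f \<xi>)
      = (\<integral>y. complex_of_real (f y) * cis (-2 * pi * ((x - y) \<bullet> \<xi>)) \<partial>lborel)" for \<xi>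
    unfolding cnj_fourier_real integral_mult_right_zero[symmetric]
    by (intro Bochner_Integration.integral_cong refl) (simp add: cis_mult inner_diff_left algebra_simps)
  have "(\<integral>\<xi>. complex_of_real (?g \<xi>) * (cis (-2 * pi * (x \<bullet> \<xi>)) * cnj (fourier_real f \<xi>)) \<partial>lborel)
      = (\<integral>\<xi>. \<integral>y. complex_of_real (?g \<xi> * f y) * cis (-2 * pi * ((x - y) \<bullet> \<xi>)) \<partial>lborel \<partial>lborel)"
    unfolding inner integral_mult_right_zero[symmetric] by (simp add: mult_ac)
  also have "\<dots> = (\<integral>y. \<integral>\<xi>. complex_of_real (?g \<xi> * f y) * cis (-2 * pi * ((x - y) \<bullet> \<xi>)) \<partial>lborel \<partial>lborel)"
    by (rule lborel_pair.Fubini_integral_bounded[OF integrable_gaussian[OF e] f, where B=1]) auto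
  also have "\<dots> = (\<integral>y. complex_of_real (f y) * complex_of_real (gauss_kernel e (x - y)) \<partial>lborel)"
    using fourier_gaussian[OF e, of "x - _"]
    by (simp add: integral_mult_right_zero[symmetric] mult_ac)
  also have "\<dots> = complex_of_real (\<integral>y. f y * gauss_kernel e (x - y) \<partial>lborel)"
    by (simp flip: integral_complex_of_real)
  finally show ?thesis .
qed

lemma integral_gaussian_fourier_real_sq:
  fixes f :: "'a::euclidean_space \<Rightarrow> real"
  assumes f: "integrable lborel f" and e: "e > 0"
  shows "(\<integral>\<xi>. exp (-pi * e * (norm \<xi>)\<^sup>2) * (norm (fourier_real f \<xi>))\<^sup>2 \<partial>lborel)
       = (\<integral>x. f x * (\<integral>y. f y * gauss_kernel e (x - y) \<partial>lborel) \<partial>lborel)"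
proof -
  let ?g = "\<lambda>\<xi>::'a. exp (-pi * e * (norm \<xi>)\<^sup>2)"
  have [measurable]: "f \<in> borel_measurable borel" using f by auto
  have [measurable]: "fourier_real f \<in> borel_measurable lborel" by measurable
  have "complex_of_real (\<integral>\<xi>. ?g \<xi> * (norm (fourier_real f \<xi>))\<^sup>2 \<partial>lborel)
      = (\<integral>\<xi>. complex_of_real (?g \<xi>) * (fourier_real f \<xi> * cnj (fourier_real f \<xi>)) \<partial>lborel)"
    by (subst integral_complex_of_real[symmetric]) (simp only: of_real_mult complex_norm_square)
  also have "\<dots> = (\<integral>\<xi>. \<integral>x. complex_of_real (?g \<xi> * f x) * (cis (-2 * pi * (x \<bullet> \<xi>)) * cnj (fourier_real f \<xi>)) \<partial>lborel \<partial>lborel)"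
    unfolding fourier_real_def integral_mult_left_zero[symmetric] integral_mult_right_zero[symmetric]
    by (simp add: mult_ac)
  also have "\<dots> = (\<integral>x. \<integral>\<xi>. complex_of_real (?g \<xi> * f x) * (cis (-2 * pi * (x \<bullet> \<xi>)) * cnj (fourier_real f \<xi>)) \<partial>lborel \<partial>lborel)"
    by (rule lborel_pair.Fubini_integral_bounded[OF integrable_gaussian[OF e] f, where B="\<integral>x. \<bar>f x\<bar> \<partial>lborel"])
      (measurable, simp add: norm_mult norm_fourier_real_le)
  also have "\<dots> = (\<integral>x. complex_of_real (f x) * complex_of_real (\<integral>y. f y * gauss_kernel e (x - y) \<partial>lborel) \<partial>lborel)"
    using integral_gaussian_cnj_fourier_real[OF f e]
    by (simp add: integral_mult_right_zero[symmetric] mult_ac)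
  also have "\<dots> = complex_of_real (\<integral>x. f x * (\<integral>y. f y * gauss_kernel e (x - y) \<partial>lborel) \<partial>lborel)"
    by (simp flip: integral_complex_of_real)
  finally show ?thesis by (simp only: of_real_eq_iff)
qed

lemma nn_integral_gaussian_fourier_real_sq_le:
  fixes f :: "'a::euclidean_space \<Rightarrow> real"
  assumes f: "integrable lborel f" and e: "e > 0"
  shows "(\<integral>\<^sup>+\<xi>. ennreal (exp (-pi * e * (norm \<xi>)\<^sup>2) * (norm (fourier_real f \<xi>))\<^sup>2) \<partial>lborel)
         \<le> (\<integral>\<^sup>+x. ennreal ((f x)\<^sup>2) \<partial>lborel)"
proof -
  let ?g = "\<lambda>\<xi>::'a. exp (-pi * e * (norm \<xi>)\<^sup>2)"
  let ?K = "gauss_kernel e :: 'a \<Rightarrow> real"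
  define L where "L = (\<integral>x. \<bar>f x\<bar> \<partial>lborel)"
  have [measurable]: "f \<in> borel_measurable borel" using f by auto
  have "integrable lborel (\<lambda>\<xi>. ?g \<xi> * (norm (fourier_real f \<xi>))\<^sup>2)"
  proof (rule Bochner_Integration.integrable_bound)
    show "integrable lborel (\<lambda>\<xi>. L\<^sup>2 * ?g \<xi>)" using integrable_gaussian[OF e, where 'a='a] by simp
    show "AE \<xi> in lborel. norm (?g \<xi> * (norm (fourier_real f \<xi>))\<^sup>2) \<le> norm (L\<^sup>2 * ?g \<xi>)"
      using norm_fourier_real_le[of f] by (intro AE_I2) (simp add: L_def power_mono mult.commute)
  qed measurable
  then have "(\<integral>\<^sup>+\<xi>. ennreal (?g \<xi> * (norm (fourier_real f \<xi>))\<^sup>2) \<partial>lborel)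
      = ennreal (\<integral>x. f x * (\<integral>y. f y * ?K (x - y) \<partial>lborel) \<partial>lborel)"
    using integral_gaussian_fourier_real_sq[OF f e] by (simp add: nn_integral_eq_integral)
  also have "\<dots> \<le> (\<integral>\<^sup>+x. \<integral>\<^sup>+y. ennreal (\<bar>f x\<bar> * \<bar>f y\<bar> * ?K (x - y)) \<partial>lborel \<partial>lborel)"
    using e by (intro ennreal_integral_quadratic_form_le) (auto simp: gauss_kernel_nonneg)
  also have "\<dots> \<le> (\<integral>\<^sup>+x. ennreal ((f x)\<^sup>2) \<partial>lborel)"
  proof (rule lborel.Schur_test_nn_integral)
    show "(\<integral>\<^sup>+x. ennreal (?K (x - y)) \<partial>lborel) \<le> 1" for y
      using nn_integral_gauss_kernel_diff[OF e, of y] by (simp add: gauss_kernel_minus_commute[of e _ y])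
  qed (use e in \<open>auto simp: gauss_kernel_nonneg nn_integral_gauss_kernel_diff\<close>)
  finally show ?thesis .
qed

lemma fourier_real_diff_translate:
  fixes E :: "'a::euclidean_space set"
  assumes [measurable]: "E \<in> sets borel" and "emeasure lborel E < \<infinity>"
  shows "fourier_real (\<lambda>x. indicator E x - indicator E (h + x)) \<xi>
       = (1 - cis (2 * pi * (h \<bullet> \<xi>))) * fourier_real (indicator E) \<xi>"
proof -
  let ?F = "\<lambda>x. cis (-2 * pi * (x \<bullet> \<xi>)) * complex_of_real (indicator E x)"
  have "integrable lborel (indicator E :: 'a \<Rightarrow> real)"
    using assms by (simp add: integrable_indicator_iff)
  then have F: "integrable lborel ?F"
    by (rule Bochner_Integration.integrable_bound) (auto simp: norm_mult)
  have shift: "cis (-2 * pi * (x \<bullet> \<xi>)) * complex_of_real (indicator E (h + x))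
      = cis (2 * pi * (h \<bullet> \<xi>)) * ?F (h + x)" for x
    by (simp add: cis_mult inner_add_left algebra_simps)
  have "fourier_real (\<lambda>x. indicator E x - indicator E (h + x)) \<xi>
      = (\<integral>x. ?F x - cis (2 * pi * (h \<bullet> \<xi>)) * ?F (h + x) \<partial>lborel)"
    unfolding fourier_real_def shift[symmetric] by (simp add: algebra_simps)
  also have "\<dots> = fourier_real (indicator E) \<xi> - cis (2 * pi * (h \<bullet> \<xi>)) * (\<integral>x. ?F (h + x) \<partial>lborel)"
    using F integrable_lborel_translate[OF F] by (simp add: fourier_real_def)
  also have "(\<integral>x. ?F (h + x) \<partial>lborel) = fourier_real (indicator E) \<xi>"
    unfolding fourier_real_def by (rule integral_lborel_translate) measurable
  finally show ?thesis by (simp add: algebra_simps)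
qed

lemma char_fun_eq_indicator: "char_fun E = (\<lambda>x. complex_of_real (indicator E x))"
  by (auto simp: fun_eq_iff char_fun_def)

lemma fourier_transform_char_fun:
  assumes [measurable]: "S \<in> sets borel"
  shows "fourier_transform (char_fun S) = fourier_real (indicator S)"
  by (simp add: fun_eq_iff fourier_transform_def fourier_real_def char_fun_eq_indicator integral_completion)

section \<open>The Gagliardo seminorm on the Fourier side\<close>

lemma gagliardo_p_char_fun_eq:
  fixes E :: "'a::euclidean_space set"
  assumes [measurable]: "E \<in> sets borel" and "0 < p"
  shows "gagliardo_p \<eta> p E = (\<integral>\<^sup>+h. \<integral>\<^sup>+x. ennreal (\<bar>indicator E x - indicator E (h + x)\<bar>
           / norm h powr (real DIM('a) + \<eta> * p)) \<partial>lborel \<partial>lborel)"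
proof -
  let ?G = "\<lambda>x y::'a. ennreal (\<bar>indicator E x - indicator E y\<bar> / norm (y - x) powr (real DIM('a) + \<eta> * p))"
  have "norm (char_fun E x - char_fun E y) powr p = \<bar>indicator E x - indicator E y\<bar>" for x y :: 'a
    using assms(2) by (auto simp: char_fun_def indicator_def)
  then have "gagliardo_p \<eta> p E = (\<integral>\<^sup>+x. \<integral>\<^sup>+y. ?G x y \<partial>lborel \<partial>lborel)"
    by (simp add: gagliardo_p_def nn_integral_completion norm_minus_commute)
  also have "\<dots> = (\<integral>\<^sup>+x. \<integral>\<^sup>+h. ?G x (x + h) \<partial>lborel \<partial>lborel)"
    by (intro nn_integral_cong nn_integral_lborel_translate[symmetric]) measurable
  also have "\<dots> = (\<integral>\<^sup>+h. \<integral>\<^sup>+x. ?G x (x + h) \<partial>lborel \<partial>lborel)"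
    by (rule lborel_pair.Fubini'[symmetric]) measurable
  finally show ?thesis by (simp add: add.commute)
qed

lemma char_in_W_borel_representative:
  fixes E :: "'a::euclidean_space set"
  assumes "char_in_W \<eta> p E"
  obtains S where "S \<in> sets borel" "emeasure lborel S < \<infinity>"
    "fourier_transform (char_fun E) = fourier_transform (char_fun S)"
    "gagliardo_p \<eta> p E = gagliardo_p \<eta> p S"
proof
  define S where "S = main_part lborel E"
  have E: "E \<in> sets lebesgue" and E_fin: "emeasure lebesgue E < \<infinity>"
    using assms by (auto simp: char_in_W_def)
  show S: "S \<in> sets borel" using main_part_sets[OF E] by (simp add: S_def)
  show "emeasure lborel S < \<infinity>" using E_fin emeasure_completion[OF E] by (simp add: S_def)
  obtain N where "N \<in> null_sets lborel" "null_part lborel E \<subseteq> N" using null_part[OF E] by blast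
  have mem: "x \<in> E \<longleftrightarrow> x \<in> S" if "x \<notin> N" for x
    using main_part_null_part_Un[OF E] \<open>null_part lborel E \<subseteq> N\<close> that by (auto simp: S_def)
  have "AE x in lebesgue. x \<notin> N" using \<open>N \<in> null_sets lborel\<close> by (intro AE_completion AE_not_in)
  then have same: "AE x in lebesgue. char_fun E x = char_fun S x"
    by eventually_elim (simp add: char_fun_def mem)
  have "(\<lambda>x. cis (- 2 * pi * (x \<bullet> \<xi>)) * char_fun X x) \<in> borel_measurable lebesgue"
    if [measurable]: "X \<in> sets lebesgue" for X and \<xi> :: 'a
  proof -
    have [measurable]: "(\<lambda>x. cis (- 2 * pi * (x \<bullet> \<xi>))) \<in> borel_measurable lebesgue"
      by (rule measurable_completion) measurable
    show ?thesis unfolding char_fun_eq_indicator by measurable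
  qed
  then show "fourier_transform (char_fun E) = fourier_transform (char_fun S)"
    unfolding fourier_transform_def fun_eq_iff using E S
    by (intro allI integral_cong_AE) (use same in \<open>auto elim: eventually_mono\<close>)
  show "gagliardo_p \<eta> p E = gagliardo_p \<eta> p S"
    unfolding gagliardo_p_def
    by (intro nn_integral_cong_AE) (use same in \<open>eventually_elim, auto intro!: nn_integral_cong_AE\<close>)
qed

lemma two_le_norm_one_minus_cis_power2:
  assumes "1/4 \<le> u" "u \<le> 3/4"
  shows "2 \<le> (norm (1 - cis (2 * pi * u)))\<^sup>2"
proof -
  have "0 \<le> cos (2 * pi * u - pi)"
    using assms by (intro cos_ge_zero) (auto simp: algebra_simps)
  then have "cos (2 * pi * u) \<le> 0" by (simp add: cos_diff)
  moreover have "(norm (1 - cis (2 * pi * u)))\<^sup>2 = 2 - 2 * cos (2 * pi * u)"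
    using sin_cos_squared_add[of "2 * pi * u"] by (simp add: cmod_power2 power2_diff)
  ultimately show ?thesis by simp
qed

lemma norm_one_minus_cis_div_ge_on_ball:
  fixes \<xi> h :: "'a::euclidean_space" and s :: real
  assumes "\<xi> \<noteq> 0" "0 < s" "h \<in> ball ((1 / (2 * (norm \<xi>)\<^sup>2)) *\<^sub>R \<xi>) (1 / (4 * norm \<xi>))"
  shows "2 * norm \<xi> powr (DIM('a) + s) \<le> (norm (1 - cis (2 * pi * (h \<bullet> \<xi>))))\<^sup>2 / norm h powr (DIM('a) + s)"
proof -
  define \<rho> where "\<rho> = norm \<xi>"
  define c where "c = (1 / (2 * \<rho>\<^sup>2)) *\<^sub>R \<xi>"
  have \<rho>: "\<rho> > 0" using assms(1) by (simp add: \<rho>_def)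
  have c: "c \<bullet> \<xi> = 1/2" "norm c = 1 / (2 * \<rho>)"
    using \<rho> by (simp_all add: c_def \<rho>_def power2_norm_eq_inner[symmetric] power2_eq_square)
  have dh: "norm (h - c) < 1 / (4 * \<rho>)" using assms(3) by (simp add: c_def \<rho>_def dist_norm norm_minus_commute)
  have "\<bar>(h - c) \<bullet> \<xi>\<bar> \<le> norm (h - c) * \<rho>" unfolding \<rho>_def by (rule Cauchy_Schwarz_ineq2)
  also have "\<dots> \<le> 1/4" using dh \<rho> mult_right_mono[of "norm (h - c)" "1 / (4 * \<rho>)" \<rho>] by simp
  finally have "\<bar>h \<bullet> \<xi> - 1/2\<bar> \<le> 1/4" using c by (simp add: inner_diff_left)
  then have "1/4 \<le> h \<bullet> \<xi>" "h \<bullet> \<xi> \<le> 3/4" by linarith+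
  then have "2 \<le> (norm (1 - cis (2 * pi * (h \<bullet> \<xi>))))\<^sup>2" by (rule two_le_norm_one_minus_cis_power2)
  moreover have "0 < norm h" "norm h \<le> 1 / \<rho>"
    using norm_triangle_ineq[of c "h - c"] norm_triangle_ineq4[of h "h - c"] dh c \<rho>
    by (auto simp: field_simps)
  then have "0 < norm h powr (DIM('a) + s)" "norm h powr (DIM('a) + s) \<le> 1 / \<rho> powr (DIM('a) + s)"
    using assms(2) \<rho> powr_mono2[of "DIM('a) + s" "norm h" "1 / \<rho>"] by (auto simp: powr_divide)
  ultimately show ?thesis
    using \<rho> by (simp add: \<rho>_def field_simps)
qed

lemma nn_integral_norm_one_minus_cis_ge:
  fixes \<xi> :: "'a::euclidean_space" and s :: real
  assumes s: "0 < s"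
  shows "ennreal (2 * measure lborel (ball (0::'a) 1) / 4 ^ DIM('a) * norm \<xi> powr s)
     \<le> (\<integral>\<^sup>+h. ennreal ((norm (1 - cis (2 * pi * (h \<bullet> \<xi>))))\<^sup>2 / norm h powr (DIM('a) + s)) \<partial>lborel)"
proof (cases "\<xi> = 0")
  case False
  define c where "c = (1 / (2 * (norm \<xi>)\<^sup>2)) *\<^sub>R \<xi>"
  define r where "r = 1 / (4 * norm \<xi>)"
  have r: "r > 0" using False by (simp add: r_def)
  have "ennreal (2 * norm \<xi> powr (DIM('a) + s)) * emeasure lborel (ball c r)
      \<le> (\<integral>\<^sup>+h. ennreal ((norm (1 - cis (2 * pi * (h \<bullet> \<xi>))))\<^sup>2 / norm h powr (DIM('a) + s)) \<partial>lborel)"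
    using norm_one_minus_cis_div_ge_on_ball[OF False s] unfolding c_def r_def
    by (subst nn_integral_cmult_indicator[symmetric]) (auto intro!: nn_integral_mono ennreal_leI simp: indicator_def)
  moreover have "emeasure lborel (ball c r) = ennreal (r ^ DIM('a) * measure lborel (ball (0::'a) 1))"
    using emeasure_lborel_ball_finite[of c r] content_ball_conv_unit_ball[of r c] r
    by (simp add: emeasure_eq_ennreal_measure)
  moreover have "2 * norm \<xi> powr (DIM('a) + s) * (r ^ DIM('a) * measure lborel (ball (0::'a) 1))
      = 2 * measure lborel (ball (0::'a) 1) / 4 ^ DIM('a) * norm \<xi> powr s"
    using False by (simp add: r_def powr_add powr_realpow power_divide power_mult_distrib field_simps)
  ultimately show ?thesis
    using r by (simp add: ennreal_mult'[symmetric])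
qed (use s in simp)

text \<open>On the ball of radius \<open>R\<close> the Gaussian weight \<open>exp (-pi |\<xi>|\<^sup>2 / R\<^sup>2)\<close> of the weighted
  Plancherel inequality is at least \<open>exp (-pi)\<close>.\<close>

lemma nn_integral_fourier_indicator_diff_le:
  fixes E :: "'a::euclidean_space set" and R :: real
  assumes [measurable]: "E \<in> sets borel" and E_fin: "emeasure lborel E < \<infinity>" and R: "0 < R"
  shows "(\<integral>\<^sup>+\<xi>. indicator (ball 0 R) \<xi>
            * ennreal ((norm (1 - cis (2 * pi * (h \<bullet> \<xi>))))\<^sup>2 * (norm (fourier_real (indicator E) \<xi>))\<^sup>2) \<partial>lborel)
     \<le> ennreal (exp pi) * (\<integral>\<^sup>+x. ennreal \<bar>indicator E x - indicator E (h + x)\<bar> \<partial>lborel)"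
proof -
  let ?D = "\<lambda>x::'a. indicator E x - indicator E (h + x) :: real"
  let ?g = "\<lambda>\<xi>::'a. exp (-pi * (1 / R\<^sup>2) * (norm \<xi>)\<^sup>2)"
  have [measurable]: "ball (0::'a) R \<in> sets borel" by simp
  have D_int: "integrable lborel ?D"
    using E_fin integrable_lborel_translate[of "indicator E :: 'a \<Rightarrow> real" h]
    by (simp add: integrable_indicator_iff)
  have weight: "indicator (ball 0 R) \<xi> \<le> exp pi * ?g \<xi>" for \<xi> :: 'a
  proof (cases "\<xi> \<in> ball 0 R")
    case True
    then have "(norm \<xi>)\<^sup>2 / R\<^sup>2 \<le> 1" using R by (simp add: power_mono)
    then have "pi * ((norm \<xi>)\<^sup>2 / R\<^sup>2) \<le> pi" by (rule mult_left_le) simp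
    then show ?thesis using True by (simp add: mult_exp_exp)
  qed simp
  have "(\<integral>\<^sup>+\<xi>. indicator (ball 0 R) \<xi>
            * ennreal ((norm (1 - cis (2 * pi * (h \<bullet> \<xi>))))\<^sup>2 * (norm (fourier_real (indicator E) \<xi>))\<^sup>2) \<partial>lborel)
      \<le> (\<integral>\<^sup>+\<xi>. ennreal (exp pi) * ennreal (?g \<xi> * (norm (fourier_real ?D \<xi>))\<^sup>2) \<partial>lborel)"
  proof (intro nn_integral_mono)
    fix \<xi>
    have "(norm (fourier_real ?D \<xi>))\<^sup>2
        = (norm (1 - cis (2 * pi * (h \<bullet> \<xi>))))\<^sup>2 * (norm (fourier_real (indicator E) \<xi>))\<^sup>2"
      unfolding fourier_real_diff_translate[OF assms(1) E_fin] norm_mult power_mult_distrib ..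
    then have "indicator (ball 0 R) \<xi>
          * ((norm (1 - cis (2 * pi * (h \<bullet> \<xi>))))\<^sup>2 * (norm (fourier_real (indicator E) \<xi>))\<^sup>2)
        \<le> exp pi * (?g \<xi> * (norm (fourier_real ?D \<xi>))\<^sup>2)"
      using mult_right_mono[OF weight[of \<xi>], of "(norm (fourier_real ?D \<xi>))\<^sup>2"] by (simp add: mult_ac)
    then show "indicator (ball 0 R) \<xi>
          * ennreal ((norm (1 - cis (2 * pi * (h \<bullet> \<xi>))))\<^sup>2 * (norm (fourier_real (indicator E) \<xi>))\<^sup>2)
        \<le> ennreal (exp pi) * ennreal (?g \<xi> * (norm (fourier_real ?D \<xi>))\<^sup>2)"
      by (cases "\<xi> \<in> ball 0 R") (auto simp flip: ennreal_mult' intro!: ennreal_leI)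
  qed
  also have "\<dots> \<le> ennreal (exp pi) * (\<integral>\<^sup>+x. ennreal ((?D x)\<^sup>2) \<partial>lborel)"
    using nn_integral_gaussian_fourier_real_sq_le[OF D_int, of "1 / R\<^sup>2"] R
    by (subst nn_integral_cmult) (auto intro: mult_left_mono)
  also have "(\<lambda>x. (?D x)\<^sup>2) = (\<lambda>x. \<bar>?D x\<bar>)" by (auto simp: indicator_def)
  finally show ?thesis .
qed

lemma nn_integral_fourier_indicator_le_gagliardo:
  fixes E :: "'a::euclidean_space set" and s R :: real
  assumes [measurable]: "E \<in> sets borel" and E_fin: "emeasure lborel E < \<infinity>" and R: "0 < R"
  shows "(\<integral>\<^sup>+\<xi>. indicator (ball 0 R) \<xi> * ennreal ((norm (fourier_real (indicator E) \<xi>))\<^sup>2)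
            * (\<integral>\<^sup>+h. ennreal ((norm (1 - cis (2 * pi * (h \<bullet> \<xi>))))\<^sup>2 / norm h powr (DIM('a) + s)) \<partial>lborel) \<partial>lborel)
     \<le> ennreal (exp pi) * (\<integral>\<^sup>+h. \<integral>\<^sup>+x. ennreal (\<bar>indicator E x - indicator E (h + x)\<bar>
            / norm h powr (DIM('a) + s)) \<partial>lborel \<partial>lborel)"
proof -
  let ?F = "fourier_real (indicator E :: 'a \<Rightarrow> real)"
  let ?N = "\<lambda>h::'a. norm h powr (DIM('a) + s)"
  let ?c = "\<lambda>h \<xi>::'a. (norm (1 - cis (2 * pi * (h \<bullet> \<xi>))))\<^sup>2"
  let ?D = "\<lambda>h x::'a. \<bar>indicator E x - indicator E (h + x)\<bar> :: real"
  let ?B = "ball (0::'a) R"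
  have [measurable]: "?F \<in> borel_measurable lborel" "?B \<in> sets borel" by simp_all
  have per_h: "(\<integral>\<^sup>+\<xi>. indicator ?B \<xi> * ennreal ((norm (?F \<xi>))\<^sup>2) * ennreal (?c h \<xi> / ?N h) \<partial>lborel)
      \<le> ennreal (exp pi) * (\<integral>\<^sup>+x. ennreal (?D h x / ?N h) \<partial>lborel)" for h
  proof -
    have "(\<integral>\<^sup>+\<xi>. indicator ?B \<xi> * ennreal ((norm (?F \<xi>))\<^sup>2) * ennreal (?c h \<xi> / ?N h) \<partial>lborel)
        = ennreal (1 / ?N h) * (\<integral>\<^sup>+\<xi>. indicator ?B \<xi> * ennreal (?c h \<xi> * (norm (?F \<xi>))\<^sup>2) \<partial>lborel)"
      by (subst nn_integral_cmult[symmetric]) (auto intro!: nn_integral_cong simp: ennreal_mult'[symmetric] mult_ac)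
    also have "\<dots> \<le> ennreal (1 / ?N h) * (ennreal (exp pi) * (\<integral>\<^sup>+x. ennreal (?D h x) \<partial>lborel))"
      by (intro mult_left_mono nn_integral_fourier_indicator_diff_le[OF assms]) simp
    also have "\<dots> = ennreal (exp pi) * (ennreal (1 / ?N h) * (\<integral>\<^sup>+x. ennreal (?D h x) \<partial>lborel))"
      by (simp only: ac_simps)
    also have "ennreal (1 / ?N h) * (\<integral>\<^sup>+x. ennreal (?D h x) \<partial>lborel) = (\<integral>\<^sup>+x. ennreal (?D h x / ?N h) \<partial>lborel)"
      by (subst nn_integral_cmult[symmetric]) (auto intro!: nn_integral_cong simp: ennreal_mult'[symmetric])
    finally show ?thesis .
  qed
  have "(\<integral>\<^sup>+\<xi>. indicator ?B \<xi> * ennreal ((norm (?F \<xi>))\<^sup>2) * (\<integral>\<^sup>+h. ennreal (?c h \<xi> / ?N h) \<partial>lborel) \<partial>lborel)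
      = (\<integral>\<^sup>+\<xi>. \<integral>\<^sup>+h. indicator ?B \<xi> * ennreal ((norm (?F \<xi>))\<^sup>2) * ennreal (?c h \<xi> / ?N h) \<partial>lborel \<partial>lborel)"
    by (simp add: nn_integral_cmult)
  also have "\<dots> = (\<integral>\<^sup>+h. \<integral>\<^sup>+\<xi>. indicator ?B \<xi> * ennreal ((norm (?F \<xi>))\<^sup>2) * ennreal (?c h \<xi> / ?N h) \<partial>lborel \<partial>lborel)"
    by (rule lborel_pair.Fubini') measurable
  also have "\<dots> \<le> (\<integral>\<^sup>+h. ennreal (exp pi) * (\<integral>\<^sup>+x. ennreal (?D h x / ?N h) \<partial>lborel) \<partial>lborel)"
    by (intro nn_integral_mono per_h)
  also have "\<dots> = ennreal (exp pi) * (\<integral>\<^sup>+h. \<integral>\<^sup>+x. ennreal (?D h x / ?N h) \<partial>lborel \<partial>lborel)"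
    by (rule nn_integral_cmult) measurable
  finally show ?thesis .
qed

lemma nn_integral_weighted_fourier_indicator_le_gagliardo:
  fixes E :: "'a::euclidean_space set" and s R :: real
  assumes [measurable]: "E \<in> sets borel" and E_fin: "emeasure lborel E < \<infinity>" and s: "0 < s" and R: "0 < R"
  defines "c \<equiv> 2 * measure lborel (ball (0::'a) 1) / 4 ^ DIM('a)"
  shows "(\<integral>\<^sup>+\<xi>. indicator (ball 0 R) \<xi> * ennreal (c * norm \<xi> powr s * (norm (fourier_real (indicator E) \<xi>))\<^sup>2) \<partial>lborel)
     \<le> ennreal (exp pi) * (\<integral>\<^sup>+h. \<integral>\<^sup>+x. ennreal (\<bar>indicator E x - indicator E (h + x)\<bar>
            / norm h powr (DIM('a) + s)) \<partial>lborel \<partial>lborel)"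
proof -
  let ?F = "fourier_real (indicator E :: 'a \<Rightarrow> real)"
  have "ennreal (c * norm \<xi> powr s * (norm (?F \<xi>))\<^sup>2)
      \<le> ennreal ((norm (?F \<xi>))\<^sup>2)
          * (\<integral>\<^sup>+h. ennreal ((norm (1 - cis (2 * pi * (h \<bullet> \<xi>))))\<^sup>2 / norm h powr (DIM('a) + s)) \<partial>lborel)"
    for \<xi> :: 'a
    using mult_left_mono[OF nn_integral_norm_one_minus_cis_ge[OF s, of \<xi>], of "ennreal ((norm (?F \<xi>))\<^sup>2)"]
    by (simp add: c_def ennreal_mult'[symmetric] mult_ac)
  then have "(\<integral>\<^sup>+\<xi>. indicator (ball 0 R) \<xi> * ennreal (c * norm \<xi> powr s * (norm (?F \<xi>))\<^sup>2) \<partial>lborel)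
      \<le> (\<integral>\<^sup>+\<xi>. indicator (ball 0 R) \<xi> * ennreal ((norm (?F \<xi>))\<^sup>2)
          * (\<integral>\<^sup>+h. ennreal ((norm (1 - cis (2 * pi * (h \<bullet> \<xi>))))\<^sup>2 / norm h powr (DIM('a) + s)) \<partial>lborel) \<partial>lborel)"
    by (intro nn_integral_mono) (simp add: mult.assoc mult_left_mono)
  also have "\<dots> \<le> ennreal (exp pi) * (\<integral>\<^sup>+h. \<integral>\<^sup>+x. ennreal (\<bar>indicator E x - indicator E (h + x)\<bar>
            / norm h powr (DIM('a) + s)) \<partial>lborel \<partial>lborel)"
    by (rule nn_integral_fourier_indicator_le_gagliardo[OF assms(1) E_fin R])
  finally show ?thesis .
qed

section \<open>Level sets of the Fourier transform\<close>

text \<open>Among sets of measure \<open>m\<close>, the integral of \<open>|\<xi>|\<^sup>s\<close> is smallest on a ball; half of the set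
  lies outside the ball of measure \<open>m/2\<close>, which already gives the bound.\<close>

lemma nn_integral_norm_powr_ge:
  fixes A :: "'a::euclidean_space set" and s :: real
  assumes s: "0 < s" and [measurable]: "A \<in> sets borel" and A_fin: "emeasure lborel A < \<infinity>"
  defines "m \<equiv> measure lborel A" and "V \<equiv> measure lborel (ball (0::'a) 1)"
  shows "ennreal (m / 2 * (m / (2 * V)) powr (s / DIM('a)))
     \<le> (\<integral>\<^sup>+\<xi>. indicator A \<xi> * ennreal (norm \<xi> powr s) \<partial>lborel)"
proof -
  have V: "V > 0" unfolding V_def by (rule content_ball_pos) simp
  define r where "r = (m / (2 * V)) powr (1 / DIM('a))"
  have r: "r \<ge> 0" "r ^ DIM('a) = m / (2 * V)"
    using V by (simp_all add: r_def m_def powr_powr flip: powr_realpow')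
  let ?B = "ball (0::'a) r"
  have "measure lborel ?B = m / 2"
    using content_ball_conv_unit_ball[of r "0::'a"] r V by (simp add: V_def)
  moreover have "measure lborel (A \<inter> ?B) \<le> measure lborel ?B"
    using emeasure_lborel_ball_finite[of "0::'a" r]
    by (intro measure_mono_fmeasurable) (auto simp: fmeasurable_def)
  moreover have "measure lborel (A - ?B) = m - measure lborel (A \<inter> ?B)"
    using A_fin measure_Diff[of lborel A "A \<inter> ?B"] by (simp add: m_def Diff_Int2 Diff_Int_distrib2 Diff_Int)
  ultimately have half: "m / 2 \<le> measure lborel (A - ?B)" by linarith
  have "ennreal (m / 2 * (m / (2 * V)) powr (s / DIM('a))) = ennreal (r powr s) * ennreal (m / 2)"
    using V by (simp add: r_def m_def powr_powr ennreal_mult'[symmetric] mult.commute)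
  also have "\<dots> \<le> ennreal (r powr s) * emeasure lborel (A - ?B)"
  proof -
    have "emeasure lborel (A - ?B) < \<infinity>"
      using A_fin by (rule le_less_trans[rotated]) (intro emeasure_mono, auto)
    then show ?thesis
      using half by (intro mult_left_mono) (auto simp: emeasure_eq_ennreal_measure less_top)
  qed
  also have "\<dots> = (\<integral>\<^sup>+\<xi>. ennreal (r powr s) * indicator (A - ?B) \<xi> \<partial>lborel)"
    by (simp add: nn_integral_cmult_indicator)
  also have "\<dots> \<le> (\<integral>\<^sup>+\<xi>. indicator A \<xi> * ennreal (norm \<xi> powr s) \<partial>lborel)"
    using s r by (intro nn_integral_mono) (auto simp: indicator_def intro!: ennreal_leI powr_mono2)
  finally show ?thesis .
qed

lemma measure_fourier_level_set_ball_le: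
  fixes E :: "'a::euclidean_space set" and s t R :: real
  assumes [measurable]: "E \<in> sets borel" and E_fin: "emeasure lborel E < \<infinity>"
    and s: "0 < s" and t: "0 < t" and R: "0 < R"
  defines "m \<equiv> measure lborel ({\<xi>. t < norm (fourier_real (indicator E) \<xi>)} \<inter> ball 0 R)"
    and "V \<equiv> measure lborel (ball (0::'a) 1)"
  defines "K \<equiv> V / (4 ^ DIM('a) * (2 * V) powr (s / DIM('a)))"
  shows "ennreal (t\<^sup>2 * K * m powr (1 + s / DIM('a)))
     \<le> ennreal (exp pi) * (\<integral>\<^sup>+h. \<integral>\<^sup>+x. ennreal (\<bar>indicator E x - indicator E (h + x)\<bar>
            / norm h powr (DIM('a) + s)) \<partial>lborel \<partial>lborel)"
proof -
  let ?F = "fourier_real (indicator E :: 'a \<Rightarrow> real)"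
  let ?A = "{\<xi>. t < norm (?F \<xi>)} \<inter> ball 0 R"
  let ?c = "2 * V / 4 ^ DIM('a)"
  have V: "V > 0" unfolding V_def by (rule content_ball_pos) simp
  have [measurable]: "?F \<in> borel_measurable borel" "ball (0::'a) R \<in> sets borel" by simp_all
  have A_fin: "emeasure lborel ?A < \<infinity>"
    using emeasure_lborel_ball_finite[of "0::'a" R]
    by (rule le_less_trans[rotated]) (intro emeasure_mono, auto)
  have "t\<^sup>2 * ?c * (m / 2 * (m / (2 * V)) powr (s / DIM('a))) = t\<^sup>2 * K * m powr (1 + s / DIM('a))"
  proof (cases "m = 0")
    case False
    then have "m > 0" by (simp add: m_def order.not_eq_order_implies_strict)
    then have "m powr (1 + s / DIM('a)) = m * m powr (s / DIM('a))" by (simp add: powr_add)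
    then show ?thesis using \<open>m > 0\<close> V by (simp add: K_def powr_divide field_simps)
  qed simp
  then have "ennreal (t\<^sup>2 * K * m powr (1 + s / DIM('a)))
      = ennreal (t\<^sup>2 * ?c) * ennreal (m / 2 * (m / (2 * V)) powr (s / DIM('a)))"
    using V by (simp add: ennreal_mult'[symmetric])
  also have "\<dots> \<le> ennreal (t\<^sup>2 * ?c) * (\<integral>\<^sup>+\<xi>. indicator ?A \<xi> * ennreal (norm \<xi> powr s) \<partial>lborel)"
    unfolding m_def V_def by (intro mult_left_mono nn_integral_norm_powr_ge s A_fin) auto
  also have "\<dots> = (\<integral>\<^sup>+\<xi>. ennreal (t\<^sup>2 * ?c) * (indicator ?A \<xi> * ennreal (norm \<xi> powr s)) \<partial>lborel)"
    by (rule nn_integral_cmult[symmetric]) measurable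
  also have "\<dots> \<le> (\<integral>\<^sup>+\<xi>. indicator (ball 0 R) \<xi> * ennreal (?c * norm \<xi> powr s * (norm (?F \<xi>))\<^sup>2) \<partial>lborel)"
  proof (intro nn_integral_mono)
    fix \<xi> :: 'a
    have "t\<^sup>2 * ?c * norm \<xi> powr s \<le> ?c * norm \<xi> powr s * (norm (?F \<xi>))\<^sup>2" if "\<xi> \<in> ?A"
    proof -
      have "t\<^sup>2 \<le> (norm (?F \<xi>))\<^sup>2" using t that by (intro power_mono) auto
      from mult_left_mono[OF this, of "?c * norm \<xi> powr s"] show ?thesis using V by (simp add: mult_ac)
    qed
    then show "ennreal (t\<^sup>2 * ?c) * (indicator ?A \<xi> * ennreal (norm \<xi> powr s))
        \<le> indicator (ball 0 R) \<xi> * ennreal (?c * norm \<xi> powr s * (norm (?F \<xi>))\<^sup>2)"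
      using V by (cases "\<xi> \<in> ?A") (auto simp flip: ennreal_mult' intro!: ennreal_leI)
  qed
  also have "\<dots> \<le> ennreal (exp pi) * (\<integral>\<^sup>+h. \<integral>\<^sup>+x. ennreal (\<bar>indicator E x - indicator E (h + x)\<bar>
            / norm h powr (DIM('a) + s)) \<partial>lborel \<partial>lborel)"
    unfolding V_def by (rule nn_integral_weighted_fourier_indicator_le_gagliardo[OF assms(1) E_fin s R])
  finally show ?thesis .
qed

lemma emeasure_fourier_level_set_le:
  fixes E :: "'a::euclidean_space set" and s t G :: real
  assumes [measurable]: "E \<in> sets borel" and E_fin: "emeasure lborel E < \<infinity>"
    and s: "0 < s" and t: "0 < t" and G: "0 \<le> G"
    and energy: "(\<integral>\<^sup>+h. \<integral>\<^sup>+x. ennreal (\<bar>indicator E x - indicator E (h + x)\<bar>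
            / norm h powr (DIM('a) + s)) \<partial>lborel \<partial>lborel) \<le> ennreal G"
  defines "V \<equiv> measure lborel (ball (0::'a) 1)"
  defines "K \<equiv> V / (4 ^ DIM('a) * (2 * V) powr (s / DIM('a)))"
  shows "emeasure lborel {\<xi>. t < norm (fourier_real (indicator E) \<xi>)}
     \<le> ennreal ((sqrt (exp pi * G / K) / t) powr (2 * DIM('a) / (DIM('a) + s)))"
proof (rule emeasure_le_of_Int_ball_le)
  let ?A = "{\<xi>. t < norm (fourier_real (indicator E :: 'a \<Rightarrow> real) \<xi>)}"
  let ?b = "(sqrt (exp pi * G / K) / t) powr (2 * DIM('a) / (DIM('a) + s))"
  show "?A \<in> sets borel" by measurable
  fix R :: real assume "0 < R"
  define m where "m = measure lborel (?A \<inter> ball 0 R)"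
  have K: "K > 0" unfolding K_def V_def by (simp add: content_ball_pos)
  have "ennreal (t\<^sup>2 * K * m powr (1 + s / DIM('a))) \<le> ennreal (exp pi) * ennreal G"
    using measure_fourier_level_set_ball_le[OF assms(1) E_fin s t \<open>0 < R\<close>] mult_left_mono[OF energy]
    unfolding m_def K_def V_def by (rule order_trans) simp
  then have "t\<^sup>2 * K * m powr (1 + s / DIM('a)) \<le> exp pi * G"
    using G by (simp add: ennreal_mult'[symmetric])
  then have "m powr (1 + s / DIM('a)) \<le> exp pi * G / K / t\<^sup>2"
    using t K by (simp add: field_simps)
  then have "m \<le> (exp pi * G / K / t\<^sup>2) powr (1 / (1 + s / DIM('a)))"
    using s by (intro le_powr_inverse_of_powr_le) (auto simp: m_def add_pos_pos)
  also have "\<dots> = ?b"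
  proof -
    have "exp pi * G / K / t\<^sup>2 = (sqrt (exp pi * G / K) / t) powr 2"
      using G K t by (simp add: powr_numeral power_divide)
    moreover have "2 * (1 / (1 + s / DIM('a))) = 2 * DIM('a) / (DIM('a) + s)"
      using s by (simp add: field_simps)
    ultimately show ?thesis by (simp only: powr_powr)
  qed
  finally have "m \<le> ?b" .
  moreover have "emeasure lborel (?A \<inter> ball 0 R) < \<infinity>"
    using emeasure_lborel_ball_finite[of "0::'a" R]
    by (rule le_less_trans[rotated]) (intro emeasure_mono, auto)
  ultimately show "emeasure lborel (?A \<inter> ball 0 R) \<le> ennreal ?b"
    by (simp add: m_def emeasure_eq_ennreal_measure less_top ennreal_leI)
qed

lemma emeasure_fourier_char_fun_level_set_le:
  fixes E :: "'a::euclidean_space set" and \<eta> p t :: real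
  assumes W: "char_in_W \<eta> p E" and s: "0 < \<eta> * p" and p: "0 < p" and t: "0 < t"
  defines "V \<equiv> measure lborel (ball (0::'a) 1)"
  defines "K \<equiv> V / (4 ^ DIM('a) * (2 * V) powr (\<eta> * p / DIM('a)))"
  shows "emeasure lebesgue {\<xi>. t < norm (fourier_transform (char_fun E) \<xi>)}
     \<le> ennreal ((sqrt (exp pi * enn2real (gagliardo_p \<eta> p E) / K) / t) powr (2 * DIM('a) / (DIM('a) + \<eta> * p)))"
proof -
  obtain S where S: "S \<in> sets borel" "emeasure lborel S < \<infinity>"
    and FT: "fourier_transform (char_fun E) = fourier_transform (char_fun S)"
    and gagliardo: "gagliardo_p \<eta> p E = gagliardo_p \<eta> p S"
    using W by (rule char_in_W_borel_representative)
  define G where "G = enn2real (gagliardo_p \<eta> p E)"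
  have G: "gagliardo_p \<eta> p S = ennreal G"
    using W gagliardo by (simp add: G_def char_in_W_def less_top)
  have "{\<xi>. t < norm (fourier_real (indicator S) \<xi>)} \<in> sets borel" using S(1) by measurable
  then show ?thesis
    using emeasure_fourier_level_set_le[OF S s t, of G] G gagliardo_p_char_fun_eq[OF S(1) p, of \<eta>]
    by (simp add: FT fourier_transform_char_fun[OF S(1)] K_def V_def G_def)
qed

theorem corollary1p5:
  fixes \<eta> p :: real
  assumes "0 < \<eta>" "\<eta> < 1" "1 \<le> p" "\<eta> * p < 1"
  shows "\<exists>C::real. \<forall>E::('a::euclidean_space) set. char_in_W \<eta> p E \<longrightarrow>
           weak_Lr_norm (2 * real DIM('a) / (real DIM('a) + \<eta> * p)) (fourier_transform (char_fun E))
             \<le> ennreal (C * enn2real (gagliardo_p \<eta> p E) powr (1/2))"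
proof -
  define V where "V = measure lborel (ball (0::'a) 1)"
  define K where "K = V / (4 ^ DIM('a) * (2 * V) powr (\<eta> * p / DIM('a)))"
  have s: "0 < \<eta> * p" and p: "0 < p" using assms by simp_all
  have K: "0 < K" by (simp add: K_def V_def content_ball_pos)
  show ?thesis
  proof (intro exI[of _ "sqrt (exp pi / K)"] allI impI)
    fix E :: "'a set"
    assume W: "char_in_W \<eta> p E"
    let ?G = "enn2real (gagliardo_p \<eta> p E)"
    have "weak_Lr_norm (2 * real DIM('a) / (real DIM('a) + \<eta> * p)) (fourier_transform (char_fun E))
        \<le> ennreal (sqrt (exp pi * ?G / K))"
      using emeasure_fourier_char_fun_level_set_le[OF W s p] s K
      by (intro weak_Lr_norm_le) (auto simp: K_def V_def add_pos_pos)
    also have "sqrt (exp pi * ?G / K) = sqrt (exp pi / K) * ?G powr (1/2)"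
      by (simp add: powr_half_sqrt real_sqrt_mult real_sqrt_divide)
    finally show "weak_Lr_norm (2 * real DIM('a) / (real DIM('a) + \<eta> * p)) (fourier_transform (char_fun E))
        \<le> ennreal (sqrt (exp pi / K) * ?G powr (1/2))" .
  qed
qed

end
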